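(* Let $\gamma>1$. Among functions $\chi(\pi)=\dfrac{\pi^2+c_1\pi+c_2}{c_3\pi+c_4}$ ($c_3\neq0$) satisfying $\chi(0)=0$, $\chi(1/3)=1/3$, $\chi'(0)=\gamma$, $\chi'(1/3)=1/2$, one has $$\chi(\pi)=\frac{\pi[\gamma+3\pi(\gamma-2)]}{1+3\pi(2\gamma-3)}.$$ For this $\chi$, the compressibility inequalities $0<\chi<1$, $\zeta(\pi)>0$, $\eta(\pi)>0$ hold for all $\pi\in(0,1/3)$; the function $e$ with $e'/e=\pi/((\chi-\pi)(\pi+1))$, $e(0)=1$, is $$e(\pi)=\frac{(1+\pi)^{\frac{5-3\gamma}{2(\gamma-1)}}}{\sqrt{1-3\pi}},\qquad\text{so } e^2(\pi)(1-3\pi)=(1+\pi)^{\frac{5-3\gamma}{\gamma-1}};$$ and the Taub inequality $e^2(\pi)(1-3\pi)\ge1$ holds for all $\pi\in(0,1/3)$ if and only if $1<\gamma\le5/3$.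
   Context: $\zeta(\pi)\equiv(1+\pi)(\chi-\pi)\chi'+2\chi(1-\chi)$, $\eta(\pi)\equiv(2\pi+1)\chi-\pi$. The variable $\pi=p/\rho\in(0,1/3)$, $\chi$ is the squared speed of sound of a generic ideal gas, $e=\rho/n$ its specific energy. *)

theory Defs
  imports "HOL-Analysis.Analysis"
begin

text \<open>zeta and eta for a given squared sound speed chi (as function of pi = p/rho).\<close>
definition zeta :: "(real \<Rightarrow> real) \<Rightarrow> real \<Rightarrow> real" where
  "zeta chi p = (1 + p) * (chi p - p) * deriv chi p + 2 * chi p * (1 - chi p)"

definition eta :: "(real \<Rightarrow> real) \<Rightarrow> real \<Rightarrow> real" where
  "eta chi p = (2 * p + 1) * chi p - p"

definition chi_ansatz :: "real \<Rightarrow> real \<Rightarrow> real \<Rightarrow> real \<Rightarrow> real \<Rightarrow> real" where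
  "chi_ansatz c1 c2 c3 c4 p = (p^2 + c1 * p + c2) / (c3 * p + c4)"

definition chi_gamma :: "real \<Rightarrow> real \<Rightarrow> real" where
  "chi_gamma g p = p * (g + 3 * p * (g - 2)) / (1 + 3 * p * (2 * g - 3))"

definition e_gamma :: "real \<Rightarrow> real \<Rightarrow> real" where
  "e_gamma g p = (1 + p) powr ((5 - 3 * g) / (2 * (g - 1))) / sqrt (1 - 3 * p)"

end

theory Submission
  imports Defs
begin

text \<open>With \<open>c\<^sub>2 = 0\<close> forced by \<open>\<chi>(0) = 0\<close>, the remaining three interpolation conditions are
  linear in \<open>c\<^sub>1, c\<^sub>3, c\<^sub>4\<close> and determine the ansatz up to the common factor \<open>c\<^sub>4\<close>.
  For the resulting \<open>\<chi>\<close> every inequality reduces, after clearing the positive denominator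
  \<open>1 + 3\<pi>(2\<gamma> - 3) = (1 - 3\<pi>) + 6\<pi>(\<gamma> - 1)\<close>, to a polynomial in \<open>\<pi>\<close> written as a sum of
  products of the positive quantities \<open>\<pi>\<close>, \<open>\<gamma> - 1\<close>, \<open>1 - 3\<pi>\<close>.
  The right-hand side of \<open>e'/e\<close> has the partial fraction decomposition
  \<open>a/(1 + \<pi>) + 3/(2(1 - 3\<pi>))\<close> with \<open>a = (5 - 3\<gamma>)/(2(\<gamma> - 1))\<close>, which integrates to the
  closed form; uniqueness holds because the quotient of two solutions has zero derivative.
  Finally \<open>e\<^sup>2(1 - 3\<pi>) = (1 + \<pi>)\<^bsup>2a\<^esup>\<close> is at least \<open>1\<close> exactly when \<open>a \<ge> 0\<close>.\<close>

lemma deriv_div_eq_iff_has_real_derivative: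
  assumes "f x \<noteq> 0" "f differentiable (at x)"
  shows "deriv f x / f x = r \<longleftrightarrow> (f has_real_derivative f x * r) (at x)"
  using assms DERIV_unique[of f "deriv f x" x "f x * r"]
  by (auto simp: DERIV_deriv_iff_real_differentiable[symmetric] field_simps)

lemma has_log_derivative_unique:
  fixes e f r :: "real \<Rightarrow> real"
  assumes e_cont: "continuous_on {a..<b} e" and f_cont: "continuous_on {a..<b} f"
    and f_nz: "\<And>x. x \<in> {a..<b} \<Longrightarrow> f x \<noteq> 0"
    and e': "\<And>x. x \<in> {a<..<b} \<Longrightarrow> (e has_real_derivative e x * r x) (at x)"
    and f': "\<And>x. x \<in> {a<..<b} \<Longrightarrow> (f has_real_derivative f x * r x) (at x)"
    and init: "e a = f a" and q: "q \<in> {a..<b}"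
  shows "e q = f q"
proof (cases "q = a")
  case False
  then have "a < q" "q < b" using q by auto
  then have sub: "{a..q} \<subseteq> {a..<b}" by auto
  have "e q / f q = e a / f a"
  proof (rule DERIV_isconst2[of a q])
    show "continuous_on {a..q} (\<lambda>x. e x / f x)"
      using sub f_nz
      by (intro continuous_on_divide continuous_on_subset[OF e_cont sub]
          continuous_on_subset[OF f_cont sub]) auto
    fix x assume "a < x" "x < q"
    then have x: "x \<in> {a<..<b}" using \<open>q < b\<close> by simp
    have "((\<lambda>x. e x / f x) has_real_derivative
            (e x * r x * f x - e x * (f x * r x)) / (f x * f x)) (at x)"
      using x f_nz by (intro DERIV_divide e' f') auto
    then show "((\<lambda>x. e x / f x) has_real_derivative 0) (at x)"
      by (simp add: algebra_simps)
  qed (use \<open>a < q\<close> in auto)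
  moreover have "f q \<noteq> 0" "f a \<noteq> 0" using f_nz q \<open>a < q\<close> by auto
  ultimately show ?thesis
    using init by (simp add: divide_eq_eq)
qed (use init in simp)

lemma one_le_powr_on_interval_iff:
  assumes "b > (0::real)"
  shows "(\<forall>p\<in>{0<..<b}. 1 \<le> (1 + p) powr c) \<longleftrightarrow> 0 \<le> c"
proof
  assume all: "\<forall>p\<in>{0<..<b}. 1 \<le> (1 + p) powr c"
  show "0 \<le> c"
  proof (rule ccontr)
    assume "\<not> 0 \<le> c"
    then have "(1 + b / 2) powr c < 1"
      using assms by (intro powr_less_one) auto
    moreover have "b / 2 \<in> {0<..<b}" using assms by simp
    ultimately show False using all by fastforce
  qed
qed (auto intro: ge_one_powr_ge_zero)

lemma chi_ansatz_has_real_derivative: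
  assumes "c3 * x + c4 \<noteq> 0"
  shows "(chi_ansatz c1 c2 c3 c4 has_real_derivative
          ((2 * x + c1) * (c3 * x + c4) - (x\<^sup>2 + c1 * x + c2) * c3) / (c3 * x + c4)\<^sup>2) (at x)"
proof -
  have num: "((\<lambda>x. x\<^sup>2 + c1 * x + c2) has_real_derivative 2 * x + c1) (at x)"
    by (auto intro!: derivative_eq_intros)
  have den: "((\<lambda>x. c3 * x + c4) has_real_derivative c3) (at x)"
    by (auto intro!: derivative_eq_intros)
  show ?thesis
    using DERIV_divide[OF num den assms] unfolding chi_ansatz_def[abs_def]
    by (simp add: power2_eq_square)
qed

lemma chi_ansatz_eq_chi_gamma:
  assumes c4: "c4 \<noteq> 0" and c34: "c3 * (1/3) + c4 \<noteq> 0"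
    and at0: "chi_ansatz c1 c2 c3 c4 0 = 0"
    and at13: "chi_ansatz c1 c2 c3 c4 (1/3) = 1/3"
    and deriv0: "(chi_ansatz c1 c2 c3 c4 has_real_derivative g) (at 0)"
    and deriv13: "(chi_ansatz c1 c2 c3 c4 has_real_derivative 1/2) (at (1/3))"
    and p: "c3 * p + c4 \<noteq> 0"
  shows "chi_ansatz c1 c2 c3 c4 p = chi_gamma g p"
proof -
  have c2: "c2 = 0"
    using at0 c4 by (simp add: chi_ansatz_def)
  have value13: "1 + 3 * c1 = c3 + 3 * c4"
    using at13 c34 c2 by (simp add: chi_ansatz_def field_simps)
  have "g = c1 * c4 / c4\<^sup>2"
    using DERIV_unique[OF deriv0 chi_ansatz_has_real_derivative] c4 c2 by simp
  then have slope0: "c1 = g * c4"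
    using c4 by (simp add: field_simps power2_eq_square)
  define D where "D = c3 * (1/3) + c4"
  have "1/2 = ((2 * (1/3) + c1) * D - ((1/3)\<^sup>2 + c1 * (1/3) + c2) * c3) / D\<^sup>2"
    unfolding D_def by (rule DERIV_unique[OF deriv13 chi_ansatz_has_real_derivative[OF c34]])
  then have "1/2 * D\<^sup>2 = (2 * (1/3) + c1) * D - ((1/3)\<^sup>2 + c1 * (1/3) + c2) * c3"
    using c34 unfolding D_def by (simp add: eq_divide_eq)
  also have "(1/3)\<^sup>2 + c1 * (1/3) + c2 = D / 3"
    unfolding D_def using value13 c2 by (simp add: power2_eq_square algebra_simps)
  finally have "D * (D / 2) = D * (2/3 + c1 - c3 / 3)"
    by (simp add: algebra_simps power2_eq_square)
  then have "D / 2 = 2/3 + c1 - c3 / 3"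
    using c34 unfolding D_def by simp
  then have slope13: "4/3 + 2 * c1 = c3 + c4"
    using c34 unfolding D_def by (simp add: field_simps)
  have c4_g: "3 * c4 * (g - 2) = 1"
    using value13 slope0 slope13 by (simp add: algebra_simps)
  have c3: "c3 = 3 * c4 * (2 * g - 3)"
    using value13 slope0 c4_g by (simp add: algebra_simps)
  have "c4 * (p * (g + 3 * p * (g - 2))) = g * c4 * p + p\<^sup>2 * (3 * c4 * (g - 2))"
    by (simp add: algebra_simps power2_eq_square)
  then have num: "p\<^sup>2 + c1 * p + c2 = c4 * (p * (g + 3 * p * (g - 2)))"
    unfolding c4_g c2 slope0 by simp
  have den: "c3 * p + c4 = c4 * (1 + 3 * p * (2 * g - 3))"
    unfolding c3 by (simp add: algebra_simps)
  show ?thesis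
    using c4 unfolding chi_ansatz_def chi_gamma_def num den by simp
qed

lemma chi_gamma_denom_pos:
  assumes "g > 1" "0 < p" "p < 1/3"
  shows "1 + 3 * p * (2 * g - 3) > (0::real)"
proof -
  have "1 + 3 * p * (2 * g - 3) = (1 - 3 * p) + 6 * (p * (g - 1))"
    by (simp add: algebra_simps)
  also have "\<dots> > 0"
    using assms by (intro add_pos_pos mult_pos_pos) auto
  finally show ?thesis .
qed

lemma chi_gamma_has_real_derivative:
  assumes "1 + 3 * p * (2 * g - 3) \<noteq> (0::real)"
  shows "(chi_gamma g has_real_derivative
          (g + 6 * (g - 2) * p + 9 * (g - 2) * (2 * g - 3) * p\<^sup>2) / (1 + 3 * p * (2 * g - 3))\<^sup>2) (at p)"
proof -
  have num: "((\<lambda>p. p * (g + 3 * p * (g - 2))) has_real_derivative g + 6 * (g - 2) * p) (at p)"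
    by (auto intro!: derivative_eq_intros simp: algebra_simps)
  have den: "((\<lambda>p. 1 + 3 * p * (2 * g - 3)) has_real_derivative 3 * (2 * g - 3)) (at p)"
    by (auto intro!: derivative_eq_intros)
  have "(g + 6 * (g - 2) * p) * (1 + 3 * p * (2 * g - 3)) - p * (g + 3 * p * (g - 2)) * (3 * (2 * g - 3))
        = g + 6 * (g - 2) * p + 9 * (g - 2) * (2 * g - 3) * p\<^sup>2"
    by (simp add: algebra_simps power2_eq_square)
  then show ?thesis
    using DERIV_divide[OF num den assms] unfolding chi_gamma_def[abs_def]
    by (simp add: power2_eq_square)
qed

lemma chi_gamma_minus_id:
  assumes "g > 1" "0 < p" "p < 1/3"
  shows "chi_gamma g p - p = p * (g - 1) * (1 - 3 * p) / (1 + 3 * p * (2 * g - 3))"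
  using chi_gamma_denom_pos[OF assms] unfolding chi_gamma_def by (simp add: field_simps)

lemma chi_gamma_gt_id:
  assumes "g > 1" "0 < p" "p < 1/3"
  shows "chi_gamma g p > p"
proof -
  have "chi_gamma g p - p > 0"
    unfolding chi_gamma_minus_id[OF assms]
    using chi_gamma_denom_pos[OF assms] assms by (intro divide_pos_pos mult_pos_pos) auto
  then show ?thesis by simp
qed

lemma chi_gamma_pos_less_one:
  assumes g: "g > 1" and p: "0 < p" "p < 1/3"
  shows "0 < chi_gamma g p" "chi_gamma g p < 1"
proof -
  define den where "den = 1 + 3 * p * (2 * g - 3)"
  define num where "num = p * (g + 3 * p * (g - 2))"
  have den: "den > 0"
    unfolding den_def using chi_gamma_denom_pos g p .
  have "den - num = (g - 1) * (p * (5 - 3 * p)) + (1 - 3 * p) * (1 - p)"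
    unfolding den_def num_def by (simp add: algebra_simps)
  also have "\<dots> > 0"
    using g p by (intro add_pos_pos mult_pos_pos) auto
  finally have "num < den" by simp
  then show "chi_gamma g p < 1"
    using den unfolding chi_gamma_def num_def den_def by simp
  show "0 < chi_gamma g p"
    using chi_gamma_gt_id[OF g p] p by simp
qed

lemma eta_chi_gamma_pos:
  assumes g: "g > 1" and p: "0 < p" "p < 1/3"
  shows "eta (chi_gamma g) p > 0"
proof -
  define den where "den = 1 + 3 * p * (2 * g - 3)"
  have den: "den > 0"
    unfolding den_def using chi_gamma_denom_pos g p .
  have "(2 * p + 1) * (p * (g + 3 * p * (g - 2))) - p * den
        = p * ((g - 1) * (1 - p + 6 * p\<^sup>2) + 2 * p * (1 - 3 * p))"
    unfolding den_def by (simp add: algebra_simps power2_eq_square)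
  also have "\<dots> > 0"
    using g p by (intro add_pos_pos mult_pos_pos) auto
  finally show ?thesis
    using den unfolding eta_def chi_gamma_def den_def by (simp add: field_simps)
qed

lemma deriv_chi_gamma_pos:
  assumes g: "g > 1" and p: "0 < p" "p < 1/3"
  shows "deriv (chi_gamma g) p > 0"
proof -
  define Q where "Q = g + 6 * (g - 2) * p + 9 * (g - 2) * (2 * g - 3) * p\<^sup>2"
  have "Q = (1 - 3 * p)\<^sup>2 + (g - 1) * ((1 - 3 * p) * (1 + 9 * p)) + 18 * (g - 1)\<^sup>2 * p\<^sup>2"
    unfolding Q_def by (simp add: algebra_simps power2_eq_square)
  also have "\<dots> > 0"
    using g p by (intro add_pos_nonneg add_nonneg_pos mult_pos_pos) auto
  finally have "Q > 0" .
  moreover have "deriv (chi_gamma g) p = Q / (1 + 3 * p * (2 * g - 3))\<^sup>2"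
    unfolding Q_def
    using chi_gamma_has_real_derivative chi_gamma_denom_pos[OF g p] by (simp add: DERIV_imp_deriv)
  ultimately show ?thesis
    using chi_gamma_denom_pos[OF g p] by simp
qed

lemma zeta_chi_gamma_pos:
  assumes g: "g > 1" and p: "0 < p" "p < 1/3"
  shows "zeta (chi_gamma g) p > 0"
proof -
  have "(1 + p) * (chi_gamma g p - p) * deriv (chi_gamma g) p > 0"
    using chi_gamma_gt_id[OF g p] deriv_chi_gamma_pos[OF g p] p by simp
  moreover have "2 * chi_gamma g p * (1 - chi_gamma g p) > 0"
    using chi_gamma_pos_less_one[OF g p] by simp
  ultimately show ?thesis
    unfolding zeta_def by linarith
qed

lemma e_gamma_pos: "0 \<le> p \<Longrightarrow> p < 1/3 \<Longrightarrow> e_gamma g p > 0"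
  unfolding e_gamma_def by simp

lemma continuous_on_e_gamma: "continuous_on {0..<1/3} (e_gamma g)"
  unfolding e_gamma_def[abs_def] by (intro continuous_intros) auto

lemma e_gamma_has_real_derivative_partial_fractions:
  fixes g p :: real
  assumes p: "-1 < p" "p < 1/3"
  defines "a \<equiv> (5 - 3 * g) / (2 * (g - 1))"
  shows "(e_gamma g has_real_derivative
          e_gamma g p * (a / (1 + p) + 3 / (2 * (1 - 3 * p)))) (at p)"
proof -
  define u where "u = (1 + p) powr a"
  define s where "s = sqrt (1 - 3 * p)"
  have u: "u > 0" and s: "s > 0" and ss: "s * s = 1 - 3 * p"
    unfolding u_def s_def using p by auto
  have "(e_gamma g has_real_derivative
      (a * (1 + p) powr (a - 1) * s - u * (- 3 / (2 * s))) / (s * s)) (at p)"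
    unfolding e_gamma_def[abs_def] a_def[symmetric] u_def s_def
    using p by (auto intro!: derivative_eq_intros simp: divide_simps)
  moreover have "(1 + p) powr (a - 1) = u / (1 + p)"
    unfolding u_def using p by (simp add: powr_diff)
  moreover have "(a * (u / (1 + p)) * s - u * (- 3 / (2 * s))) / (s * s)
      = u / s * (a / (1 + p) + 3 / (2 * (1 - 3 * p)))"
    unfolding ss[symmetric] using u s p by (simp add: field_simps)
  moreover have "e_gamma g p = u / s"
    unfolding e_gamma_def a_def[symmetric] u_def s_def ..
  ultimately show ?thesis by simp
qed

lemma log_derivative_partial_fractions:
  assumes g: "g > 1" and p: "0 < p" "p < 1/3"
  shows "p / ((chi_gamma g p - p) * (p + 1))
       = (5 - 3 * g) / (2 * (g - 1)) / (1 + p) + 3 / (2 * (1 - 3 * p))"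
proof -
  define den where "den = 1 + 3 * p * (2 * g - 3)"
  have nz: "den \<noteq> 0" "g - 1 \<noteq> 0" "1 - 3 * p \<noteq> 0" "1 + p \<noteq> 0" "p \<noteq> 0"
    unfolding den_def using chi_gamma_denom_pos[OF g p] g p by auto
  have "(chi_gamma g p - p) * (p + 1) = p * ((g - 1) * (1 - 3 * p) * (1 + p)) / den"
    unfolding chi_gamma_minus_id[OF g p] den_def by (simp add: algebra_simps)
  then have "p / ((chi_gamma g p - p) * (p + 1)) = den / ((g - 1) * (1 - 3 * p) * (1 + p))"
    using nz by simp
  also have "\<dots> = ((5 - 3 * g) * (2 * (1 - 3 * p)) + 3 * (2 * (g - 1) * (1 + p)))
                    / (2 * (g - 1) * (1 + p) * (2 * (1 - 3 * p)))"
  proof (rule iffD2[OF frac_eq_eq])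
    show "(g - 1) * (1 - 3 * p) * (1 + p) \<noteq> 0" "2 * (g - 1) * (1 + p) * (2 * (1 - 3 * p)) \<noteq> 0"
      using nz by auto
  qed (simp add: den_def algebra_simps)
  also have "\<dots> = (5 - 3 * g) / (2 * (g - 1)) / (1 + p) + 3 / (2 * (1 - 3 * p))"
    using nz by (simp add: add_frac_eq)
  finally show ?thesis .
qed

lemma e_gamma_has_real_derivative:
  assumes g: "g > 1" and p: "0 < p" "p < 1/3"
  shows "(e_gamma g has_real_derivative e_gamma g p * (p / ((chi_gamma g p - p) * (p + 1)))) (at p)"
  unfolding log_derivative_partial_fractions[OF assms]
  using e_gamma_has_real_derivative_partial_fractions p by simp

lemma e_gamma_sq_mult:
  assumes p: "-1 < p" "p < 1/3"
  shows "(e_gamma g p)\<^sup>2 * (1 - 3 * p) = (1 + p) powr ((5 - 3 * g) / (g - 1))"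
proof -
  define a where "a = (5 - 3 * g) / (2 * (g - 1))"
  have "(e_gamma g p)\<^sup>2 * (1 - 3 * p) = ((1 + p) powr a)\<^sup>2"
    unfolding e_gamma_def a_def[symmetric] using p by (simp add: power_divide)
  also have "\<dots> = (1 + p) powr (a * 2)"
    using p by (simp add: powr_powr[symmetric] powr_realpow)
  also have "a * 2 = (5 - 3 * g) / (g - 1)"
    unfolding a_def by (cases "g = 1") (simp_all add: field_simps)
  finally show ?thesis .
qed

lemma e_gamma_solves_log_derivative_eq:
  assumes g: "g > 1" and p: "p \<in> {0<..<1/3}"
  shows "e_gamma g p \<noteq> 0 \<and> e_gamma g differentiable (at p)
       \<and> deriv (e_gamma g) p / e_gamma g p = p / ((chi_gamma g p - p) * (p + 1))"
proof -
  have e_gamma': "(e_gamma g has_real_derivative e_gamma g p * (p / ((chi_gamma g p - p) * (p + 1)))) (at p)"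
    using e_gamma_has_real_derivative g p by simp
  have "e_gamma g p \<noteq> 0"
    using e_gamma_pos[of p g] p by simp
  moreover have "e_gamma g differentiable (at p)"
    using e_gamma' real_differentiable_def by blast
  ultimately show ?thesis
    using e_gamma' deriv_div_eq_iff_has_real_derivative by blast
qed

lemma e_gamma_unique_solution:
  assumes g: "g > 1" and e0: "e 0 = 1" and e_cont: "continuous_on {0..<1/3} e"
    and e: "\<forall>p\<in>{0<..<1/3}. e p \<noteq> 0 \<and> e differentiable (at p)
              \<and> deriv e p / e p = p / ((chi_gamma g p - p) * (p + 1))"
    and q: "q \<in> {0..<1/3}"
  shows "e q = e_gamma g q"
proof (rule has_log_derivative_unique[OF e_cont continuous_on_e_gamma])
  show "(e has_real_derivative e p * (p / ((chi_gamma g p - p) * (p + 1)))) (at p)"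
    if "p \<in> {0<..<1/3}" for p
    using e that deriv_div_eq_iff_has_real_derivative by blast
  show "(e_gamma g has_real_derivative e_gamma g p * (p / ((chi_gamma g p - p) * (p + 1)))) (at p)"
    if "p \<in> {0<..<1/3}" for p
    using e_gamma_has_real_derivative g that by simp
  show "e_gamma g p \<noteq> 0" if "p \<in> {0..<1/3}" for p
    using e_gamma_pos[of p g] that by simp
  show "e 0 = e_gamma g 0"
    using e0 by (simp add: e_gamma_def)
qed (rule q)

lemma taub_inequality_iff:
  assumes g: "g > 1"
  shows "(\<forall>p\<in>{0<..<1/3}. (e_gamma g p)\<^sup>2 * (1 - 3 * p) \<ge> 1) \<longleftrightarrow> g \<le> 5/3"
proof -
  have "0 \<le> (5 - 3 * g) / (g - 1) \<longleftrightarrow> g \<le> 5/3"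
    using g by (auto simp: zero_le_divide_iff)
  then show ?thesis
    using one_le_powr_on_interval_iff[of "1/3"] e_gamma_sq_mult by simp
qed

theorem mainTheorem4:
  fixes g :: real
  assumes hg: "g > 1"
  shows
    \<comment> \<open>(1) the ansatz with the four conditions forces chi = chi_gamma\<close>
    "(\<forall>c1 c2 c3 c4. c3 \<noteq> 0 \<and> c4 \<noteq> 0 \<and> c3 * (1/3) + c4 \<noteq> 0
        \<and> chi_ansatz c1 c2 c3 c4 0 = 0
        \<and> chi_ansatz c1 c2 c3 c4 (1/3) = 1/3
        \<and> (chi_ansatz c1 c2 c3 c4 has_real_derivative g) (at 0)
        \<and> (chi_ansatz c1 c2 c3 c4 has_real_derivative 1/2) (at (1/3))
      \<longrightarrow> (\<forall>p. c3 * p + c4 \<noteq> 0 \<longrightarrow> chi_ansatz c1 c2 c3 c4 p = chi_gamma g p))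
    \<comment> \<open>(2) compressibility inequalities\<close>
    \<and> (\<forall>p\<in>{0<..<1/3}. 0 < chi_gamma g p \<and> chi_gamma g p < 1
          \<and> zeta (chi_gamma g) p > 0 \<and> eta (chi_gamma g) p > 0)
    \<comment> \<open>(3a) e_gamma solves e'/e = pi/((chi-pi)(pi+1)), e(0)=1\<close>
    \<and> (e_gamma g 0 = 1 \<and> continuous_on {0..<1/3} (e_gamma g)
        \<and> (\<forall>p\<in>{0<..<1/3}. e_gamma g p \<noteq> 0 \<and> e_gamma g differentiable (at p)
             \<and> deriv (e_gamma g) p / e_gamma g p
                 = p / ((chi_gamma g p - p) * (p + 1))))
    \<comment> \<open>(3b) and it is the unique such function\<close>
    \<and> (\<forall>e. e 0 = 1 \<and> continuous_on {0..<1/3} e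
          \<and> (\<forall>p\<in>{0<..<1/3}. e p \<noteq> 0 \<and> e differentiable (at p)
               \<and> deriv e p / e p = p / ((chi_gamma g p - p) * (p + 1)))
        \<longrightarrow> (\<forall>p\<in>{0..<1/3}. e p = e_gamma g p))
    \<comment> \<open>(3c) e^2 (1 - 3 pi) = (1+pi)^((5-3g)/(g-1))\<close>
    \<and> (\<forall>p\<in>{0<..<1/3}. (e_gamma g p)^2 * (1 - 3 * p) = (1 + p) powr ((5 - 3 * g) / (g - 1)))
    \<comment> \<open>(4) Taub inequality iff g <= 5/3\<close>
    \<and> ((\<forall>p\<in>{0<..<1/3}. (e_gamma g p)^2 * (1 - 3 * p) \<ge> 1) \<longleftrightarrow> g \<le> 5/3)"
proof (intro conjI)
  show "e_gamma g 0 = 1"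
    by (simp add: e_gamma_def)
qed (use chi_ansatz_eq_chi_gamma chi_gamma_pos_less_one[OF hg] zeta_chi_gamma_pos[OF hg]
      eta_chi_gamma_pos[OF hg] continuous_on_e_gamma e_gamma_solves_log_derivative_eq[OF hg]
      e_gamma_unique_solution[OF hg] e_gamma_sq_mult taub_inequality_iff[OF hg] in simp)+

end
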